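(* Let $\Lambda$ be a consistent normal modal logic, let $M\subseteq\{\Diamond,\Box\}$, and let $C$ be a Boolean clone. (1) If $\Lambda$ is of Type A, then $\mathsf{Clos}^\Lambda_M(C)=C$. (2) If $\Lambda$ is of Type B, then $\mathsf{Clos}^\Lambda_M(C)$ equals $C$ if $M=\emptyset$, $C\sqcup\{\bot\}$ if $M=\{\Diamond\}$, $C\sqcup\{\top\}$ if $M=\{\Box\}$, and $C\sqcup\{\top,\bot\}$ if $M=\{\Diamond,\Box\}$. (3) If $\Lambda$ is of Type C, then $C\subseteq\mathsf{Clos}^\Lambda_M(C)\subseteq D$, where $D$ is $C$ if $M=\emptyset$, $C\sqcup\{\bot\}$ if $M=\{\Diamond\}$, $C\sqcup\{\top\}$ if $M=\{\Box\}$, and $C\sqcup\{\top,\bot\}$ if $M=\{\Diamond,\Box\}$.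
   Context: Modal formulas: $\phi::=x\mid\neg\phi\mid\phi\land\psi\mid\phi\lor\psi\mid\Diamond\phi\mid\Box\phi$. A normal modal logic is a set of modal formulas containing all propositional tautologies, the K axiom and $\Diamond\phi\leftrightarrow\neg\Box\neg\phi$, closed under modus ponens, uniform substitution and necessitation; $\Lambda\vdash\phi$ means $\phi\in\Lambda$. $F_\circ$ ($F_\bullet$) is the one-world frame with a reflexive (irreflexive) world. $\Lambda$ is of Type A if $F_\circ\models\Lambda$; of Type B if $F_\bullet\models\Lambda$ and $\Lambda\vdash\Box^n\bot$ for some $n\ge1$; of Type C if $F_\bullet\models\Lambda$, $\Lambda\not\vdash\Box^n\bot$ for all $n\ge1$, and $\Lambda\vdash\bigvee_{k\le n}\Diamond^k\Box\bot$ for some $n\ge1$. A Boolean function is a map $\{0,1\}^n\to\{0,1\}$ with $n\ge1$ (constants $\top,\bot$ are constant unary functions); a Boolean clone is a set of Boolean functions containing all projections and closed under composition; for sets $C,X$ of Boolean functions, $C\sqcup X$ is the Boolean clone generated by $C\cup X$. For each Boolean function $f$ fix a propositional formula $\phi_f$ defining it. For a set $\Phi$ of modal formulas, $\mathrm{ML}_\Phi$ is the smallest set containing all variables and containing $\oplus_\phi(\psi_1,\dots,\psi_n)$ whenever $\phi(x_1,\dots,x_n)\in\Phi$ and $\psi_i\in\mathrm{ML}_\Phi$; such a formula is identified with the ordinary modal formula obtained by recursively substituting $\psi_i$ for $x_i$ in $\phi$. $\mathrm{ML}_{M\cup O}$ denotes $\mathrm{ML}_\Phi$ where $\Phi$ consists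 of $\Diamond x$ (if $\Diamond\in M$), $\Box x$ (if $\Box\in M$) and $\phi_f$ for $f\in O$. $\mathsf{Clos}^\Lambda_M(O)$ is the set of Boolean functions $f$ such that $\Lambda\vdash\phi_f\leftrightarrow\phi$ for some $\phi\in\mathrm{ML}_{M\cup O}$. *)

theory Defs
  imports Main
begin

datatype fm = Var nat | Neg fm | Conj fm fm | Disj fm fm | Dia fm | Box fm

definition Imp :: "fm \<Rightarrow> fm \<Rightarrow> fm" where "Imp a b = Disj (Neg a) b"
definition Iff :: "fm \<Rightarrow> fm \<Rightarrow> fm" where "Iff a b = Conj (Imp a b) (Imp b a)"
definition Bot :: fm where "Bot = Conj (Var 0) (Neg (Var 0))"

fun subst :: "(nat \<Rightarrow> fm) \<Rightarrow> fm \<Rightarrow> fm" where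
  "subst s (Var n) = s n"
| "subst s (Neg a) = Neg (subst s a)"
| "subst s (Conj a b) = Conj (subst s a) (subst s b)"
| "subst s (Disj a b) = Disj (subst s a) (subst s b)"
| "subst s (Dia a) = Dia (subst s a)"
| "subst s (Box a) = Box (subst s a)"

fun vars :: "fm \<Rightarrow> nat set" where
  "vars (Var n) = {n}"
| "vars (Neg a) = vars a"
| "vars (Conj a b) = vars a \<union> vars b"
| "vars (Disj a b) = vars a \<union> vars b"
| "vars (Dia a) = vars a"
| "vars (Box a) = vars a"

fun modal_free :: "fm \<Rightarrow> bool" where
  "modal_free (Var n) = True"
| "modal_free (Neg a) = modal_free a"
| "modal_free (Conj a b) = (modal_free a \<and> modal_free b)"
| "modal_free (Disj a b) = (modal_free a \<and> modal_free b)"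
| "modal_free (Dia a) = False"
| "modal_free (Box a) = False"

text \<open>Propositional evaluation (only meaningful on modal-free formulas).\<close>
fun pval :: "(nat \<Rightarrow> bool) \<Rightarrow> fm \<Rightarrow> bool" where
  "pval v (Var n) = v n"
| "pval v (Neg a) = (\<not> pval v a)"
| "pval v (Conj a b) = (pval v a \<and> pval v b)"
| "pval v (Disj a b) = (pval v a \<or> pval v b)"
| "pval v (Dia a) = False"
| "pval v (Box a) = False"

definition ptaut :: "fm \<Rightarrow> bool" where
  "ptaut a \<longleftrightarrow> modal_free a \<and> (\<forall>v. pval v a)"

fun boxn :: "nat \<Rightarrow> fm \<Rightarrow> fm" where
  "boxn 0 a = a" | "boxn (Suc n) a = Box (boxn n a)"

fun dian :: "nat \<Rightarrow> fm \<Rightarrow> fm" where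
  "dian 0 a = a" | "dian (Suc n) a = Dia (dian n a)"

fun dis_dia_box_bot :: "nat \<Rightarrow> fm" where
  "dis_dia_box_bot 0 = Box Bot"
| "dis_dia_box_bot (Suc n) = Disj (dis_dia_box_bot n) (dian (Suc n) (Box Bot))"

definition normal_logic :: "fm set \<Rightarrow> bool" where
  "normal_logic L \<longleftrightarrow>
     (\<forall>a. ptaut a \<longrightarrow> a \<in> L)
   \<and> (\<forall>a b. Imp (Box (Imp a b)) (Imp (Box a) (Box b)) \<in> L)
   \<and> (\<forall>a. Iff (Dia a) (Neg (Box (Neg a))) \<in> L)
   \<and> (\<forall>a b. a \<in> L \<longrightarrow> Imp a b \<in> L \<longrightarrow> b \<in> L)
   \<and> (\<forall>a s. a \<in> L \<longrightarrow> subst s a \<in> L)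
   \<and> (\<forall>a. a \<in> L \<longrightarrow> Box a \<in> L)"

definition consistent :: "fm set \<Rightarrow> bool" where
  "consistent L \<longleftrightarrow> Bot \<notin> L"

fun sat :: "('w \<Rightarrow> 'w \<Rightarrow> bool) \<Rightarrow> (nat \<Rightarrow> 'w \<Rightarrow> bool) \<Rightarrow> 'w \<Rightarrow> fm \<Rightarrow> bool" where
  "sat R V w (Var n) = V n w"
| "sat R V w (Neg a) = (\<not> sat R V w a)"
| "sat R V w (Conj a b) = (sat R V w a \<and> sat R V w b)"
| "sat R V w (Disj a b) = (sat R V w a \<or> sat R V w b)"
| "sat R V w (Dia a) = (\<exists>u. R w u \<and> sat R V u a)"
| "sat R V w (Box a) = (\<forall>u. R w u \<longrightarrow> sat R V u a)"

definition frame_validates :: "('w \<Rightarrow> 'w \<Rightarrow> bool) \<Rightarrow> fm set \<Rightarrow> bool" where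
  "frame_validates R L \<longleftrightarrow> (\<forall>a\<in>L. \<forall>V w. sat R V w a)"

definition F_refl :: "unit \<Rightarrow> unit \<Rightarrow> bool" where "F_refl = (\<lambda>_ _. True)"
definition F_irr :: "unit \<Rightarrow> unit \<Rightarrow> bool" where "F_irr = (\<lambda>_ _. False)"

definition typeA :: "fm set \<Rightarrow> bool" where
  "typeA L \<longleftrightarrow> frame_validates F_refl L"

definition typeB :: "fm set \<Rightarrow> bool" where
  "typeB L \<longleftrightarrow> frame_validates F_irr L \<and> (\<exists>n\<ge>1. boxn n Bot \<in> L)"

definition typeC :: "fm set \<Rightarrow> bool" where
  "typeC L \<longleftrightarrow> frame_validates F_irr L \<and> (\<forall>n\<ge>1. boxn n Bot \<notin> L)
      \<and> (\<exists>n\<ge>1. dis_dia_box_bot n \<in> L)"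

text \<open>A Boolean function of arity n is encoded as (n, f) where f is the function on
  lists of length n, normalised to False on lists of other lengths.\<close>
type_synonym bfun = "nat \<times> (bool list \<Rightarrow> bool)"

definition is_bfun :: "bfun \<Rightarrow> bool" where
  "is_bfun F \<longleftrightarrow> fst F \<ge> 1 \<and> (\<forall>xs. length xs \<noteq> fst F \<longrightarrow> snd F xs = False)"

definition bproj :: "nat \<Rightarrow> nat \<Rightarrow> bfun" where
  "bproj n i = (n, \<lambda>xs. length xs = n \<and> xs ! i)"

definition bcomp :: "bfun \<Rightarrow> bfun list \<Rightarrow> nat \<Rightarrow> bfun" where
  "bcomp F gs m = (m, \<lambda>xs. length xs = m \<and> snd F (map (\<lambda>g. snd g xs) gs))"

definition clone :: "bfun set \<Rightarrow> bool" where
  "clone C \<longleftrightarrow> C \<subseteq> Collect is_bfun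
    \<and> (\<forall>n i. 1 \<le> n \<and> i < n \<longrightarrow> bproj n i \<in> C)
    \<and> (\<forall>F gs m. F \<in> C \<and> length gs = fst F \<and> m \<ge> 1 \<and> (\<forall>g\<in>set gs. g \<in> C \<and> fst g = m)
                 \<longrightarrow> bcomp F gs m \<in> C)"

definition gen_clone :: "bfun set \<Rightarrow> bfun set" where
  "gen_clone X = \<Inter>{D. clone D \<and> X \<subseteq> D}"

definition clone_join :: "bfun set \<Rightarrow> bfun set \<Rightarrow> bfun set" (infixl "\<squnion>\<^sub>c" 65) where
  "C \<squnion>\<^sub>c X = gen_clone (C \<union> X)"

definition btop :: bfun where "btop = (1, \<lambda>xs. length xs = 1)"
definition bbot :: bfun where "bbot = (1, \<lambda>xs. False)"

text \<open>A choice of defining formulas: phi F is a propositional formula in the variables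
  Var 0, ..., Var (n-1) (standing for x_1, ..., x_n) defining F.\<close>
definition defining_choice :: "(bfun \<Rightarrow> fm) \<Rightarrow> bool" where
  "defining_choice phi \<longleftrightarrow> (\<forall>F. is_bfun F \<longrightarrow>
      modal_free (phi F) \<and> vars (phi F) \<subseteq> {..<fst F}
      \<and> (\<forall>v. pval v (phi F) = snd F (map v [0..<fst F])))"

datatype mop = MDia | MBox

inductive_set MLf :: "mop set \<Rightarrow> bfun set \<Rightarrow> (bfun \<Rightarrow> fm) \<Rightarrow> fm set"
  for M Ops phi where
  var: "Var i \<in> MLf M Ops phi"
| dia: "MDia \<in> M \<Longrightarrow> a \<in> MLf M Ops phi \<Longrightarrow> Dia a \<in> MLf M Ops phi"
| box: "MBox \<in> M \<Longrightarrow> a \<in> MLf M Ops phi \<Longrightarrow> Box a \<in> MLf M Ops phi"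
| op: "F \<in> Ops \<Longrightarrow> length as = fst F \<Longrightarrow> (\<forall>a\<in>set as. a \<in> MLf M Ops phi) \<Longrightarrow>
        subst (\<lambda>i. if i < fst F then as ! i else Var i) (phi F) \<in> MLf M Ops phi"

definition Clos :: "fm set \<Rightarrow> (bfun \<Rightarrow> fm) \<Rightarrow> mop set \<Rightarrow> bfun set \<Rightarrow> bfun set" where
  "Clos L phi M Ops = {F. is_bfun F \<and> (\<exists>a\<in>MLf M Ops phi. Iff (phi F) a \<in> L)}"

end

theory Submission
  imports Defs "HOL-Library.Countable"
begin

text \<open>
  At the single world of \<open>F\<^sub>\<circ>\<close> the modalities are the identity, and at the single world
  of \<open>F\<^sub>\<bullet>\<close> the formula \<open>\<Diamond>a\<close> is false and \<open>\<box>a\<close> is true. Hence every formula of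
  \<open>ML\<^sub>M\<^sub>\<union>\<^sub>C\<close>, evaluated at that world, computes a Boolean function of the clone generated by
  \<open>C\<close> (together with \<open>\<bottom>\<close> if \<open>\<Diamond> \<in> M\<close> and \<open>\<top>\<close> if \<open>\<box> \<in> M\<close> in the irreflexive case). If
  \<open>\<Lambda>\<close> is valid on the frame and \<open>\<Lambda> \<turnstile> \<phi>\<^sub>f \<leftrightarrow> a\<close>, then \<open>f\<close> is the function computed by \<open>a\<close>;
  this gives the upper bounds. Conversely, \<open>Clos\<close> is a clone containing \<open>C\<close> by replacement
  of equivalents, and if \<open>\<Lambda> \<turnstile> \<box>\<^sup>n\<bottom>\<close> then \<open>\<Diamond>\<^sup>n x\<close> defines \<open>\<bottom>\<close> and \<open>\<box>\<^sup>n x\<close> defines \<open>\<top>\<close>.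
\<close>

subsection \<open>Tautological reasoning in normal logics\<close>

instance fm :: countable by countable_datatype

fun tf_val :: "(fm \<Rightarrow> bool) \<Rightarrow> fm \<Rightarrow> bool" where
  "tf_val v (Var n) = v (Var n)"
| "tf_val v (Neg a) = (\<not> tf_val v a)"
| "tf_val v (Conj a b) = (tf_val v a \<and> tf_val v b)"
| "tf_val v (Disj a b) = (tf_val v a \<or> tf_val v b)"
| "tf_val v (Dia a) = v (Dia a)"
| "tf_val v (Box a) = v (Box a)"

fun prop_skeleton :: "fm \<Rightarrow> fm" where
  "prop_skeleton (Var n) = Var (to_nat (Var n))"
| "prop_skeleton (Neg a) = Neg (prop_skeleton a)"
| "prop_skeleton (Conj a b) = Conj (prop_skeleton a) (prop_skeleton b)"
| "prop_skeleton (Disj a b) = Disj (prop_skeleton a) (prop_skeleton b)"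
| "prop_skeleton (Dia a) = Var (to_nat (Dia a))"
| "prop_skeleton (Box a) = Var (to_nat (Box a))"

lemma modal_free_prop_skeleton: "modal_free (prop_skeleton a)"
  by (induction a) auto

lemma subst_prop_skeleton: "subst from_nat (prop_skeleton a) = a"
  by (induction a) auto

lemma pval_prop_skeleton: "pval v (prop_skeleton a) = tf_val (\<lambda>b. v (to_nat b)) a"
  by (induction a) auto

lemma tf_val_Imp [simp]: "tf_val v (Imp a b) = (tf_val v a \<longrightarrow> tf_val v b)"
  by (simp add: Imp_def)

lemma tf_val_Iff [simp]: "tf_val v (Iff a b) = (tf_val v a = tf_val v b)"
  by (auto simp add: Iff_def)

lemma tf_val_Bot [simp]: "\<not> tf_val v Bot"
  by (simp add: Bot_def)

lemma normal_logic_ptaut: "normal_logic L \<Longrightarrow> ptaut a \<Longrightarrow> a \<in> L"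
  unfolding normal_logic_def by blast

lemma normal_logic_K: "normal_logic L \<Longrightarrow> Imp (Box (Imp a b)) (Imp (Box a) (Box b)) \<in> L"
  unfolding normal_logic_def by blast

lemma normal_logic_Dia_dual: "normal_logic L \<Longrightarrow> Iff (Dia a) (Neg (Box (Neg a))) \<in> L"
  unfolding normal_logic_def by blast

lemma normal_logic_mp: "normal_logic L \<Longrightarrow> a \<in> L \<Longrightarrow> Imp a b \<in> L \<Longrightarrow> b \<in> L"
  unfolding normal_logic_def by blast

lemma normal_logic_subst: "normal_logic L \<Longrightarrow> a \<in> L \<Longrightarrow> subst s a \<in> L"
  unfolding normal_logic_def by blast

lemma normal_logic_nec: "normal_logic L \<Longrightarrow> a \<in> L \<Longrightarrow> Box a \<in> L"
  unfolding normal_logic_def by blast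

lemma normal_logic_tf_taut:
  assumes "normal_logic L" and "\<And>v. tf_val v a"
  shows "a \<in> L"
proof -
  have "ptaut (prop_skeleton a)"
    using assms(2) by (simp add: ptaut_def modal_free_prop_skeleton pval_prop_skeleton)
  then have "subst from_nat (prop_skeleton a) \<in> L"
    using assms(1) normal_logic_ptaut normal_logic_subst by blast
  then show ?thesis
    by (simp add: subst_prop_skeleton)
qed

lemma normal_logic_tf_consequence:
  assumes L: "normal_logic L"
    and "set as \<subseteq> L" and "\<And>v. \<forall>a\<in>set as. tf_val v a \<Longrightarrow> tf_val v b"
  shows "b \<in> L"
  using assms(2,3)
proof (induction as arbitrary: b)
  case Nil
  then show ?case
    using normal_logic_tf_taut[OF L] by simp
next
  case (Cons a as)
  have "Imp a b \<in> L"
    using Cons.prems by (intro Cons.IH) auto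
  moreover have "a \<in> L"
    using Cons.prems(1) by simp
  ultimately show ?case
    using normal_logic_mp[OF L] by blast
qed

subsection \<open>Replacement of equivalents\<close>

lemma normal_logic_Box_mono:
  assumes L: "normal_logic L" and "Imp a b \<in> L"
  shows "Imp (Box a) (Box b) \<in> L"
  using normal_logic_mp[OF L normal_logic_nec[OF assms] normal_logic_K[OF L]] .

lemma normal_logic_Box_cong:
  assumes L: "normal_logic L" and ab: "Iff a b \<in> L"
  shows "Iff (Box a) (Box b) \<in> L"
proof -
  have "Imp a b \<in> L" "Imp b a \<in> L"
    by (rule normal_logic_tf_consequence[OF L, of "[Iff a b]"]; use ab in auto)+
  then have "Imp (Box a) (Box b) \<in> L" "Imp (Box b) (Box a) \<in> L"
    using normal_logic_Box_mono[OF L] by blast+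
  then show ?thesis
    by (intro normal_logic_tf_consequence[OF L, of "[Imp (Box a) (Box b), Imp (Box b) (Box a)]"])
      auto
qed

lemma normal_logic_Dia_cong:
  assumes L: "normal_logic L" and ab: "Iff a b \<in> L"
  shows "Iff (Dia a) (Dia b) \<in> L"
proof -
  have "Iff (Neg a) (Neg b) \<in> L"
    by (rule normal_logic_tf_consequence[OF L, of "[Iff a b]"]) (use ab in auto)
  then have "Iff (Box (Neg a)) (Box (Neg b)) \<in> L"
    by (rule normal_logic_Box_cong[OF L])
  then show ?thesis
    using normal_logic_Dia_dual[OF L, of a] normal_logic_Dia_dual[OF L, of b]
    by (intro normal_logic_tf_consequence[OF L,
          of "[Iff (Box (Neg a)) (Box (Neg b)), Iff (Dia a) (Neg (Box (Neg a))),
               Iff (Dia b) (Neg (Box (Neg b)))]"]) auto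
qed

lemma normal_logic_subst_cong:
  assumes L: "normal_logic L" and st: "\<And>i. Iff (s i) (t i) \<in> L"
  shows "Iff (subst s b) (subst t b) \<in> L"
proof (induction b)
  case (Var i)
  then show ?case using st by simp
next
  case (Neg b)
  then show ?case
    by (intro normal_logic_tf_consequence[OF L, of "[Iff (subst s b) (subst t b)]"]) auto
next
  case (Conj b c)
  then show ?case
    by (intro normal_logic_tf_consequence[OF L,
          of "[Iff (subst s b) (subst t b), Iff (subst s c) (subst t c)]"]) auto
next
  case (Disj b c)
  then show ?case
    by (intro normal_logic_tf_consequence[OF L,
          of "[Iff (subst s b) (subst t b), Iff (subst s c) (subst t c)]"]) auto
next
  case (Dia b)
  then show ?case using normal_logic_Dia_cong[OF L] by simp
next
  case (Box b)
  then show ?case using normal_logic_Box_cong[OF L] by simp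
qed

lemma normal_logic_boxn_mono:
  assumes L: "normal_logic L" and "Imp a b \<in> L"
  shows "Imp (boxn n a) (boxn n b) \<in> L"
  by (induction n) (simp_all add: assms normal_logic_Box_mono[OF L])

lemma normal_logic_boxn_Bot:
  assumes L: "normal_logic L" and "boxn n Bot \<in> L"
  shows "boxn n b \<in> L"
proof -
  have "Imp Bot b \<in> L"
    by (rule normal_logic_tf_taut[OF L]) simp
  then show ?thesis
    using assms(2) normal_logic_boxn_mono[OF L] normal_logic_mp[OF L] by blast
qed

lemma normal_logic_dian_dual:
  assumes L: "normal_logic L"
  shows "Iff (dian n a) (Neg (boxn n (Neg a))) \<in> L"
proof (induction n)
  case 0
  show ?case
    by (simp, rule normal_logic_tf_taut[OF L]) simp
next
  case (Suc n)
  have "Iff (Neg (dian n a)) (boxn n (Neg a)) \<in> L"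
    by (rule normal_logic_tf_consequence[OF L, of "[Iff (dian n a) (Neg (boxn n (Neg a)))]"])
      (use Suc in auto)
  then have "Iff (Box (Neg (dian n a))) (Box (boxn n (Neg a))) \<in> L"
    by (rule normal_logic_Box_cong[OF L])
  then show ?case
    using normal_logic_Dia_dual[OF L, of "dian n a"]
    by (simp, intro normal_logic_tf_consequence[OF L,
          of "[Iff (Box (Neg (dian n a))) (Box (boxn n (Neg a))),
               Iff (Dia (dian n a)) (Neg (Box (Neg (dian n a))))]"]) auto
qed

lemma subst_Iff [simp]: "subst s (Iff a b) = Iff (subst s a) (subst s b)"
  by (simp add: Iff_def Imp_def)

lemma subst_subst: "subst s (subst t b) = subst (\<lambda>i. subst s (t i)) b"
  by (induction b) auto

lemma subst_vars_cong: "(\<And>i. i \<in> vars b \<Longrightarrow> s i = t i) \<Longrightarrow> subst s b = subst t b"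
  by (induction b) auto

lemma subst_Var: "subst Var b = b"
  by (induction b) auto

lemma tf_val_subst_modal_free:
  "modal_free b \<Longrightarrow> tf_val v (subst t b) = pval (\<lambda>i. tf_val v (t i)) b"
  by (induction b) auto

lemma sat_subst: "sat R V w (subst s b) = sat R (\<lambda>i w. sat R V w (s i)) w b"
  by (induction b arbitrary: w) auto

lemma sat_modal_free: "modal_free b \<Longrightarrow> sat R V w b = pval (\<lambda>i. V i w) b"
  by (induction b) auto

lemma sat_Iff [simp]: "sat R V w (Iff a b) = (sat R V w a = sat R V w b)"
  by (auto simp: Iff_def Imp_def)

abbreviation apply_op :: "(bfun \<Rightarrow> fm) \<Rightarrow> bfun \<Rightarrow> fm list \<Rightarrow> fm" where
  "apply_op phi F as \<equiv> subst (\<lambda>i. if i < fst F then as ! i else Var i) (phi F)"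

lemma defining_choiceD:
  assumes "defining_choice phi" and "is_bfun F"
  shows "modal_free (phi F)" and "vars (phi F) \<subseteq> {..<fst F}"
    and "pval v (phi F) = snd F (map v [0..<fst F])"
  using assms unfolding defining_choice_def by blast+

lemma map_nth_comp: "map (\<lambda>i. f (xs ! i)) [0..<length xs] = map f xs"
  by (rule nth_equalityI) auto

lemma pval_apply_op:
  assumes "defining_choice phi" and "is_bfun F" and "length as = fst F"
  shows "pval (\<lambda>i. f (if i < fst F then as ! i else Var i)) (phi F) = snd F (map f as)"
proof -
  have "map (\<lambda>i. f (if i < fst F then as ! i else Var i)) [0..<fst F]
      = map (\<lambda>i. f (as ! i)) [0..<length as]"
    using assms(3) by simp
  then show ?thesis
    by (simp add: defining_choiceD(3)[OF assms(1,2)] map_nth_comp)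
qed

lemma tf_val_phi:
  "defining_choice phi \<Longrightarrow> is_bfun F \<Longrightarrow>
    tf_val v (phi F) = snd F (map (\<lambda>i. v (Var i)) [0..<fst F])"
  using tf_val_subst_modal_free[of "phi F" v Var]
  by (simp add: subst_Var defining_choiceD)

lemma tf_val_apply_op:
  "defining_choice phi \<Longrightarrow> is_bfun F \<Longrightarrow> length as = fst F \<Longrightarrow>
    tf_val v (apply_op phi F as) = snd F (map (tf_val v) as)"
  by (simp add: tf_val_subst_modal_free defining_choiceD(1) pval_apply_op)

lemma sat_apply_op:
  "defining_choice phi \<Longrightarrow> is_bfun F \<Longrightarrow> length as = fst F \<Longrightarrow>
    sat R V w (apply_op phi F as) = snd F (map (sat R V w) as)"
  by (simp add: sat_subst sat_modal_free defining_choiceD(1) pval_apply_op)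

lemma sat_phi:
  "defining_choice phi \<Longrightarrow> is_bfun F \<Longrightarrow>
    sat R V w (phi F) = snd F (map (\<lambda>i. V i w) [0..<fst F])"
  by (simp add: sat_modal_free defining_choiceD)

lemma apply_op_Var:
  assumes "defining_choice phi" and "is_bfun F"
  shows "apply_op phi F (map Var [0..<fst F]) = phi F"
proof -
  have "apply_op phi F (map Var [0..<fst F]) = subst Var (phi F)"
    using defining_choiceD(2)[OF assms] by (intro subst_vars_cong) auto
  then show ?thesis
    by (simp add: subst_Var)
qed

lemma MLf_subst:
  assumes "a \<in> MLf M Ops phi" and "\<And>i. s i \<in> MLf M Ops phi"
    and "defining_choice phi" and "Ops \<subseteq> Collect is_bfun"
  shows "subst s a \<in> MLf M Ops phi"
  using assms(1)
proof (induction a rule: MLf.induct)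
  case (var i)
  then show ?case using assms(2) by simp
next
  case (dia a)
  then show ?case by (simp add: MLf.dia)
next
  case (box a)
  then show ?case by (simp add: MLf.box)
next
  case (op F as)
  have "vars (phi F) \<subseteq> {..<fst F}"
    using op(1) assms(3,4) defining_choiceD(2) by blast
  then have "subst s (apply_op phi F as) = apply_op phi F (map (subst s) as)"
    unfolding subst_subst using op(2) by (intro subst_vars_cong) auto
  then show ?case
    using op(1-3) by (simp add: MLf.op)
qed

lemma clone_bfun: "clone C \<Longrightarrow> C \<subseteq> Collect is_bfun"
  unfolding clone_def by blast

lemma clone_proj: "clone D \<Longrightarrow> 1 \<le> n \<Longrightarrow> i < n \<Longrightarrow> bproj n i \<in> D"
  unfolding clone_def by blast

lemma clone_comp:
  "clone D \<Longrightarrow> F \<in> D \<Longrightarrow> length gs = fst F \<Longrightarrow> 1 \<le> m \<Longrightarrow>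
    (\<forall>g\<in>set gs. g \<in> D \<and> fst g = m) \<Longrightarrow> bcomp F gs m \<in> D"
  unfolding clone_def by blast

lemma clone_join_least: "clone D \<Longrightarrow> C \<union> X \<subseteq> D \<Longrightarrow> C \<squnion>\<^sub>c X \<subseteq> D"
  unfolding clone_join_def gen_clone_def by blast

lemma subset_clone_joinI: "(\<And>D. clone D \<Longrightarrow> C \<union> X \<subseteq> D \<Longrightarrow> Y \<subseteq> D) \<Longrightarrow> Y \<subseteq> C \<squnion>\<^sub>c X"
  unfolding clone_join_def gen_clone_def by blast

lemma clone_join_empty: "clone C \<Longrightarrow> C \<squnion>\<^sub>c {} = C"
  by (intro subset_antisym clone_join_least subset_clone_joinI) auto

lemma bfun_eqI:
  "is_bfun F \<Longrightarrow> fst G = fst F \<Longrightarrow> (\<And>xs. length xs = fst F \<Longrightarrow> snd F xs = snd G xs) \<Longrightarrow>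
    (\<And>xs. length xs \<noteq> fst F \<Longrightarrow> \<not> snd G xs) \<Longrightarrow> F = G"
  unfolding is_bfun_def by (cases F, cases G) (auto simp: fun_eq_iff)

lemma subset_Clos:
  assumes L: "normal_logic L" and "clone C" and phi: "defining_choice phi"
  shows "C \<subseteq> Clos L phi M C"
proof
  fix F assume F: "F \<in> C"
  then have bf: "is_bfun F"
    using clone_bfun[OF \<open>clone C\<close>] by blast
  have "apply_op phi F (map Var [0..<fst F]) \<in> MLf M C phi"
    by (rule MLf.op[OF F]) (auto intro: MLf.var)
  then have "phi F \<in> MLf M C phi"
    by (simp add: apply_op_Var[OF phi bf])
  moreover have "Iff (phi F) (phi F) \<in> L"
    by (rule normal_logic_tf_taut[OF L]) simp
  ultimately show "F \<in> Clos L phi M C"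
    using bf unfolding Clos_def by blast
qed

lemma bproj_in_Clos:
  assumes L: "normal_logic L" and phi: "defining_choice phi" and "1 \<le> n" and "i < n"
  shows "bproj n i \<in> Clos L phi M C"
proof -
  have bf: "is_bfun (bproj n i)"
    using assms(3) unfolding is_bfun_def bproj_def by auto
  have "Iff (phi (bproj n i)) (Var i) \<in> L"
    by (rule normal_logic_tf_taut[OF L]) (simp add: tf_val_phi[OF phi bf], simp add: bproj_def assms(4))
  then show ?thesis
    using bf unfolding Clos_def by (blast intro: MLf.var)
qed

lemma phi_bcomp_equiv:
  assumes L: "normal_logic L" and phi: "defining_choice phi"
    and F: "is_bfun F" and len: "length gs = fst F"
    and gs: "\<forall>g\<in>set gs. is_bfun g \<and> fst g = m" and "1 \<le> m"
  shows "Iff (phi (bcomp F gs m)) (apply_op phi F (map phi gs)) \<in> L"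
proof (rule normal_logic_tf_taut[OF L])
  fix v
  have bf: "is_bfun (bcomp F gs m)"
    using \<open>1 \<le> m\<close> unfolding is_bfun_def bcomp_def by auto
  have "tf_val v (apply_op phi F (map phi gs)) = snd F (map (tf_val v) (map phi gs))"
    using tf_val_apply_op[OF phi F] len by simp
  also have "\<dots> = snd F (map (\<lambda>g. snd g (map (\<lambda>i. v (Var i)) [0..<m])) gs)"
    using gs by (auto simp: tf_val_phi[OF phi] intro!: arg_cong[where f = "snd F"])
  also have "\<dots> = tf_val v (phi (bcomp F gs m))"
    by (simp add: tf_val_phi[OF phi bf], simp add: bcomp_def)
  finally show "tf_val v (Iff (phi (bcomp F gs m)) (apply_op phi F (map phi gs)))"
    by simp
qed

lemma bcomp_in_Clos:
  assumes L: "normal_logic L" and "clone C" and phi: "defining_choice phi"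
    and F: "F \<in> Clos L phi M C" and len: "length gs = fst F" and "1 \<le> m"
    and gs: "\<forall>g\<in>set gs. g \<in> Clos L phi M C \<and> fst g = m"
  shows "bcomp F gs m \<in> Clos L phi M C"
proof -
  obtain a where bfF: "is_bfun F" and a: "a \<in> MLf M C phi" and Fa: "Iff (phi F) a \<in> L"
    using F unfolding Clos_def by blast
  have "\<forall>g\<in>set gs. \<exists>a. is_bfun g \<and> a \<in> MLf M C phi \<and> Iff (phi g) a \<in> L"
    using gs unfolding Clos_def by blast
  then obtain A where A: "\<And>g. g \<in> set gs \<Longrightarrow> is_bfun g \<and> A g \<in> MLf M C phi \<and> Iff (phi g) (A g) \<in> L"
    by metis
  define t where "t = (\<lambda>i. if i < fst F then map phi gs ! i else Var i)"
  define s where "s = (\<lambda>i. if i < fst F then map A gs ! i else Var i)"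
  have "Iff (phi (bcomp F gs m)) (subst t (phi F)) \<in> L"
    unfolding t_def using gs A by (intro phi_bcomp_equiv[OF L phi bfF len _ \<open>1 \<le> m\<close>]) auto
  moreover have "Iff (subst t (phi F)) (subst t a) \<in> L"
    using normal_logic_subst[OF L Fa, of t] by simp
  moreover have "Iff (subst t a) (subst s a) \<in> L"
  proof (rule normal_logic_subst_cong[OF L])
    fix i
    show "Iff (t i) (s i) \<in> L"
      using A[of "gs ! i"] len normal_logic_tf_taut[OF L, of "Iff (Var i) (Var i)"]
      by (simp add: s_def t_def)
  qed
  ultimately have "Iff (phi (bcomp F gs m)) (subst s a) \<in> L"
    by (intro normal_logic_tf_consequence[OF L,
          of "[Iff (phi (bcomp F gs m)) (subst t (phi F)), Iff (subst t (phi F)) (subst t a),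
               Iff (subst t a) (subst s a)]"]) auto
  moreover have "subst s a \<in> MLf M C phi"
    using A len clone_bfun[OF \<open>clone C\<close>]
    by (intro MLf_subst[OF a _ phi]) (auto simp: s_def intro: MLf.var)
  moreover have "is_bfun (bcomp F gs m)"
    using \<open>1 \<le> m\<close> unfolding is_bfun_def bcomp_def by auto
  ultimately show ?thesis
    unfolding Clos_def by blast
qed

lemma clone_Clos:
  assumes "normal_logic L" and "clone C" and "defining_choice phi"
  shows "clone (Clos L phi M C)"
proof -
  have "Clos L phi M C \<subseteq> Collect is_bfun"
    unfolding Clos_def by blast
  then show ?thesis
    unfolding clone_def using bproj_in_Clos[OF assms(1,3)] bcomp_in_Clos[OF assms] by blast
qed

lemma clone_join_subset_Clos:
  "normal_logic L \<Longrightarrow> clone C \<Longrightarrow> defining_choice phi \<Longrightarrow> X \<subseteq> Clos L phi M C \<Longrightarrow>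
    C \<squnion>\<^sub>c X \<subseteq> Clos L phi M C"
  by (intro clone_join_least clone_Clos Un_least subset_Clos)

subsection \<open>Evaluation on a one-world frame\<close>

text \<open>
  A formula may mention variables beyond the intended arity \<open>n\<close>; these are read as the
  first argument, so that \<open>one_world_fun R n a\<close> is an \<open>n\<close>-ary Boolean function for every
  \<open>n \<ge> 1\<close>.
\<close>

definition world_val :: "bool list \<Rightarrow> nat \<Rightarrow> unit \<Rightarrow> bool" where
  "world_val xs i _ = xs ! (if i < length xs then i else 0)"

definition one_world_fun :: "(unit \<Rightarrow> unit \<Rightarrow> bool) \<Rightarrow> nat \<Rightarrow> fm \<Rightarrow> bfun" where
  "one_world_fun R n a = (n, \<lambda>xs. length xs = n \<and> sat R (world_val xs) () a)"

lemma one_world_fun_Var: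
  "one_world_fun R n (Var i) = bproj n (if i < n then i else 0)"
  unfolding one_world_fun_def bproj_def world_val_def by (auto simp: fun_eq_iff)

lemma one_world_fun_Dia:
  "one_world_fun R n (Dia a) = (if R () () then one_world_fun R n a else bcomp bbot [bproj n 0] n)"
  unfolding one_world_fun_def bcomp_def bbot_def by (auto simp: fun_eq_iff)

lemma one_world_fun_Box:
  "one_world_fun R n (Box a) = (if R () () then one_world_fun R n a else bcomp btop [bproj n 0] n)"
  unfolding one_world_fun_def bcomp_def btop_def bproj_def by (auto simp: fun_eq_iff)

lemma one_world_fun_apply_op:
  "defining_choice phi \<Longrightarrow> is_bfun F \<Longrightarrow> length as = fst F \<Longrightarrow>
    one_world_fun R n (apply_op phi F as) = bcomp F (map (one_world_fun R n) as) n"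
  unfolding one_world_fun_def bcomp_def by (auto simp: fun_eq_iff sat_apply_op comp_def)

lemma one_world_fun_in_clone:
  assumes D: "clone D" and "C \<subseteq> D" and phi: "defining_choice phi"
    and bbot: "\<not> R () () \<Longrightarrow> MDia \<in> M \<Longrightarrow> bbot \<in> D"
    and btop: "\<not> R () () \<Longrightarrow> MBox \<in> M \<Longrightarrow> btop \<in> D"
    and "a \<in> MLf M C phi" and n: "1 \<le> n"
  shows "one_world_fun R n a \<in> D"
  using \<open>a \<in> MLf M C phi\<close>
proof (induction a rule: MLf.induct)
  case (var i)
  show ?case
    using clone_proj[OF D n] n by (simp add: one_world_fun_Var)
next
  case (dia a)
  have "bcomp bbot [bproj n 0] n \<in> D" if "\<not> R () ()"
    using clone_comp[OF D bbot[OF that dia(1)]] clone_proj[OF D n] n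
    by (simp add: bbot_def bproj_def)
  then show ?case
    using dia.IH by (simp add: one_world_fun_Dia)
next
  case (box a)
  have "bcomp btop [bproj n 0] n \<in> D" if "\<not> R () ()"
    using clone_comp[OF D btop[OF that box(1)]] clone_proj[OF D n] n
    by (simp add: btop_def bproj_def)
  then show ?case
    using box.IH by (simp add: one_world_fun_Box)
next
  case (op F as)
  have "is_bfun F"
    using op(1) \<open>C \<subseteq> D\<close> clone_bfun[OF D] by blast
  have "bcomp F (map (one_world_fun R n) as) n \<in> D"
    using op \<open>C \<subseteq> D\<close> n by (intro clone_comp[OF D]) (auto simp: one_world_fun_def)
  then show ?case
    using op(2) by (simp add: one_world_fun_apply_op[OF phi \<open>is_bfun F\<close>])
qed

lemma one_world_fun_eq_if_valid:
  assumes phi: "defining_choice phi" and F: "is_bfun F"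
    and "frame_validates R L" and "Iff (phi F) a \<in> L"
  shows "one_world_fun R (fst F) a = F"
proof (rule sym, rule bfun_eqI[OF F])
  fix xs :: "bool list"
  assume len: "length xs = fst F"
  have "map (\<lambda>i. world_val xs i ()) [0..<fst F] = xs"
    using len by (intro nth_equalityI) (auto simp: world_val_def)
  moreover have "sat R (world_val xs) () (phi F) = sat R (world_val xs) () a"
    using assms(3,4) unfolding frame_validates_def by fastforce
  ultimately show "snd F xs = snd (one_world_fun R (fst F) a) xs"
    using len by (simp add: one_world_fun_def sat_phi[OF phi F])
qed (simp_all add: one_world_fun_def)

lemma Clos_subset_of_one_world_frame:
  assumes D: "clone D" and "C \<subseteq> D" and phi: "defining_choice phi"
    and "\<not> R () () \<Longrightarrow> MDia \<in> M \<Longrightarrow> bbot \<in> D"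
    and "\<not> R () () \<Longrightarrow> MBox \<in> M \<Longrightarrow> btop \<in> D"
    and valid: "frame_validates R L"
  shows "Clos L phi M C \<subseteq> D"
proof
  fix F assume "F \<in> Clos L phi M C"
  then obtain a where F: "is_bfun F" and a: "a \<in> MLf M C phi" and Fa: "Iff (phi F) a \<in> L"
    unfolding Clos_def by blast
  have "1 \<le> fst F"
    using F unfolding is_bfun_def by blast
  then have "one_world_fun R (fst F) a \<in> D"
    using one_world_fun_in_clone[OF assms(1-5) a] by blast
  then show "F \<in> D"
    by (simp add: one_world_fun_eq_if_valid[OF phi F valid Fa])
qed

definition mop_constants :: "mop set \<Rightarrow> bfun set" where
  "mop_constants M = (if MDia \<in> M then {bbot} else {}) \<union> (if MBox \<in> M then {btop} else {})"

lemma Clos_eq_if_typeA: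
  assumes "normal_logic L" and "clone C" and "defining_choice phi" and "typeA L"
  shows "Clos L phi M C = C"
proof (rule subset_antisym)
  show "Clos L phi M C \<subseteq> C"
    using assms(2-4) unfolding typeA_def
    by (intro Clos_subset_of_one_world_frame[where R = F_refl]) (simp_all add: F_refl_def)
  show "C \<subseteq> Clos L phi M C"
    by (rule subset_Clos[OF assms(1-3)])
qed

lemma Clos_subset_if_irreflexive:
  assumes "clone C" and "defining_choice phi" and "frame_validates F_irr L"
  shows "Clos L phi M C \<subseteq> C \<squnion>\<^sub>c mop_constants M"
proof (rule subset_clone_joinI)
  fix D assume "clone D" and "C \<union> mop_constants M \<subseteq> D"
  then show "Clos L phi M C \<subseteq> D"
    using assms(2,3)
    by (intro Clos_subset_of_one_world_frame) (auto simp: mop_constants_def)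
qed

lemma bbot_in_Clos:
  assumes L: "normal_logic L" and phi: "defining_choice phi"
    and "boxn n Bot \<in> L" and "MDia \<in> M"
  shows "bbot \<in> Clos L phi M C"
proof -
  have bf: "is_bfun bbot"
    unfolding is_bfun_def bbot_def by simp
  have bot: "\<not> tf_val v (phi bbot)" for v
    by (simp add: tf_val_phi[OF phi bf], simp add: bbot_def)
  have "dian n (Var 0) \<in> MLf M C phi"
    using \<open>MDia \<in> M\<close> by (induction n) (auto intro: MLf.var MLf.dia)
  moreover have "Iff (phi bbot) (dian n (Var 0)) \<in> L"
    using normal_logic_boxn_Bot[OF L \<open>boxn n Bot \<in> L\<close>, of "Neg (Var 0)"]
      normal_logic_dian_dual[OF L, of n "Var 0"]
    by (intro normal_logic_tf_consequence[OF L,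
          of "[boxn n (Neg (Var 0)), Iff (dian n (Var 0)) (Neg (boxn n (Neg (Var 0))))]"])
      (auto simp: bot)
  ultimately show ?thesis
    using bf unfolding Clos_def by blast
qed

lemma btop_in_Clos:
  assumes L: "normal_logic L" and phi: "defining_choice phi"
    and "boxn n Bot \<in> L" and "MBox \<in> M"
  shows "btop \<in> Clos L phi M C"
proof -
  have bf: "is_bfun btop"
    unfolding is_bfun_def btop_def by simp
  have top: "tf_val v (phi btop)" for v
    by (simp add: tf_val_phi[OF phi bf], simp add: btop_def)
  have "boxn n (Var 0) \<in> MLf M C phi"
    using \<open>MBox \<in> M\<close> by (induction n) (auto intro: MLf.var MLf.box)
  moreover have "Iff (phi btop) (boxn n (Var 0)) \<in> L"
    using normal_logic_boxn_Bot[OF L \<open>boxn n Bot \<in> L\<close>, of "Var 0"]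
    by (intro normal_logic_tf_consequence[OF L, of "[boxn n (Var 0)]"])
      (auto simp: top)
  ultimately show ?thesis
    using bf unfolding Clos_def by blast
qed

lemma Clos_eq_if_typeB:
  assumes L: "normal_logic L" and C: "clone C" and phi: "defining_choice phi" and "typeB L"
  shows "Clos L phi M C = C \<squnion>\<^sub>c mop_constants M"
proof (rule subset_antisym)
  show "Clos L phi M C \<subseteq> C \<squnion>\<^sub>c mop_constants M"
    using \<open>typeB L\<close> by (intro Clos_subset_if_irreflexive[OF C phi]) (simp add: typeB_def)
  obtain n where "boxn n Bot \<in> L"
    using \<open>typeB L\<close> unfolding typeB_def by blast
  then have "mop_constants M \<subseteq> Clos L phi M C"
    using bbot_in_Clos[OF L phi] btop_in_Clos[OF L phi] by (simp add: mop_constants_def)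
  then show "C \<squnion>\<^sub>c mop_constants M \<subseteq> Clos L phi M C"
    by (rule clone_join_subset_Clos[OF L C phi])
qed

theorem theorem4p15:
  fixes L :: "fm set" and M :: "mop set" and C :: "bfun set" and phi :: "bfun \<Rightarrow> fm"
  assumes "normal_logic L" and "consistent L"
    and "clone C"
    and "defining_choice phi"
  shows "(typeA L \<longrightarrow> Clos L phi M C = C)
   \<and> (typeB L \<longrightarrow>
        (M = {} \<longrightarrow> Clos L phi M C = C)
      \<and> (M = {MDia} \<longrightarrow> Clos L phi M C = C \<squnion>\<^sub>c {bbot})
      \<and> (M = {MBox} \<longrightarrow> Clos L phi M C = C \<squnion>\<^sub>c {btop})
      \<and> (M = {MDia, MBox} \<longrightarrow> Clos L phi M C = C \<squnion>\<^sub>c {btop, bbot}))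
   \<and> (typeC L \<longrightarrow> C \<subseteq> Clos L phi M C \<and>
        (M = {} \<longrightarrow> Clos L phi M C \<subseteq> C)
      \<and> (M = {MDia} \<longrightarrow> Clos L phi M C \<subseteq> C \<squnion>\<^sub>c {bbot})
      \<and> (M = {MBox} \<longrightarrow> Clos L phi M C \<subseteq> C \<squnion>\<^sub>c {btop})
      \<and> (M = {MDia, MBox} \<longrightarrow> Clos L phi M C \<subseteq> C \<squnion>\<^sub>c {btop, bbot}))"
proof -
  have constants: "mop_constants {} = {}" "mop_constants {MDia} = {bbot}"
    "mop_constants {MBox} = {btop}" "mop_constants {MDia, MBox} = {btop, bbot}"
    by (auto simp: mop_constants_def)
  have "typeC L \<Longrightarrow> Clos L phi M C \<subseteq> C \<squnion>\<^sub>c mop_constants M"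
    by (intro Clos_subset_if_irreflexive[OF assms(3,4)]) (simp add: typeC_def)
  then show ?thesis
    using Clos_eq_if_typeA[OF assms(1,3,4)] Clos_eq_if_typeB[OF assms(1,3,4)]
      subset_Clos[OF assms(1,3,4)]
    by (auto simp: constants clone_join_empty[OF assms(3)])
qed

end
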